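(* Let $R$ be an associative ring with identity and involution $*$, and let $a\in R^{\#}\cap R^{\dagger}$. Then $a\in R^{SEP}$ if and only if $a(a^{\#})^*a^{\dagger}$ and $a^{\dagger}a^2$ are left $a^{\dagger}a^2$-equivalent, i.e. $a^{\dagger}a^2\,a(a^{\#})^*a^{\dagger}=a^{\dagger}a^2\,a^{\dagger}a^2$.
   Context: An involution on $R$ is a map $x\mapsto x^*$ with $(x^* )^*=x$, $(x+y)^*=x^*+y^*$, $(xy)^*=y^*x^*$. An element $a$ is Moore–Penrose invertible if there is $b$ with $aba=a$, $bab=b$, $(ab)^*=ab$, $(ba)^*=ba$; such $b$ is unique, denoted $a^{\dagger}$, and $R^{\dagger}$ is the set of such $a$. An element $a$ is group invertible if there is $b$ with $aba=a$, $bab=b$, $ab=ba$; such $b$ is unique, denoted $a^{\#}$, and $R^{\#}$ is the set of such $a$. For $a\in R^{\#}\cap R^{\dagger}$, $a$ is SEP if $a^*=a^{\dagger}=a^{\#}$; $R^{SEP}$ denotes the set of SEP elements. For $x,b,c\in R$, $b$ and $c$ are left $x$-equivalent if $xb=xc$. *)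

theory Defs
  imports Main
begin

definition involution :: "('a::ring_1 \<Rightarrow> 'a) \<Rightarrow> bool" where
  "involution s \<longleftrightarrow> (\<forall>x. s (s x) = x) \<and> (\<forall>x y. s (x + y) = s x + s y)
      \<and> (\<forall>x y. s (x * y) = s y * s x)"

definition is_mp_inverse :: "('a::ring_1 \<Rightarrow> 'a) \<Rightarrow> 'a \<Rightarrow> 'a \<Rightarrow> bool" where
  "is_mp_inverse s a b \<longleftrightarrow> a * b * a = a \<and> b * a * b = b \<and> s (a * b) = a * b \<and> s (b * a) = b * a"

definition mp_invertible :: "('a::ring_1 \<Rightarrow> 'a) \<Rightarrow> 'a \<Rightarrow> bool" where
  "mp_invertible s a \<longleftrightarrow> (\<exists>b. is_mp_inverse s a b)"

definition mp_inv :: "('a::ring_1 \<Rightarrow> 'a) \<Rightarrow> 'a \<Rightarrow> 'a" where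
  "mp_inv s a = (THE b. is_mp_inverse s a b)"

definition is_group_inverse :: "'a::ring_1 \<Rightarrow> 'a \<Rightarrow> bool" where
  "is_group_inverse a b \<longleftrightarrow> a * b * a = a \<and> b * a * b = b \<and> a * b = b * a"

definition group_invertible :: "'a::ring_1 \<Rightarrow> bool" where
  "group_invertible a \<longleftrightarrow> (\<exists>b. is_group_inverse a b)"

definition group_inv :: "'a::ring_1 \<Rightarrow> 'a" where
  "group_inv a = (THE b. is_group_inverse a b)"

definition SEP :: "('a::ring_1 \<Rightarrow> 'a) \<Rightarrow> 'a \<Rightarrow> bool" where
  "SEP s a \<longleftrightarrow> group_invertible a \<and> mp_invertible s a
      \<and> s a = mp_inv s a \<and> mp_inv s a = group_inv a"

definition left_equiv :: "'a::ring_1 \<Rightarrow> 'a \<Rightarrow> 'a \<Rightarrow> bool" where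
  "left_equiv x b c \<longleftrightarrow> x * b = x * c"

end

theory Submission
  imports Defs
begin

text \<open>
  Write \<open>x = a\<^sup>\<dagger>\<close> and \<open>g = a\<^sup>#\<close>. Since \<open>a x a = a\<close> and \<open>g a\<^sup>2 = a\<close>, the left
  \<open>x a\<^sup>2\<close>-equivalence collapses to \<open>a g\<^sup>* x = a\<close>. Multiplying this on the right by
  \<open>a x\<close> gives \<open>a\<^sup>2 x = a\<close>, hence \<open>g a = a x\<close>; so \<open>g\<close> satisfies the Penrose equations
  and \<open>x = g\<close>. Then \<open>a g = g a\<close> is Hermitian, and \<open>a g\<^sup>* g = a\<close> forces \<open>g\<^sup>* = a\<close>.
\<close>

lemma involutionD:
  assumes "involution s"
  shows "s (s x) = x" and "s (x * y) = s y * s x"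
  using assms by (auto simp: involution_def)

lemma reflexive_inverses_unique:
  fixes a b c :: "'a::semigroup_mult"
  assumes "b * a * b = b" "c * a * c = c" "a * b = a * c" "b * a = c * a"
  shows "b = c"
proof -
  have "b = b * (a * b)" using assms(1) by (simp add: mult.assoc)
  also have "\<dots> = c * a * c" using assms(3,4) by (metis mult.assoc)
  finally show ?thesis using assms(2) by simp
qed

lemma mp_inverse_unique:
  assumes "involution s" "is_mp_inverse s a b" "is_mp_inverse s a c"
  shows "b = c"
proof -
  have b: "a * b * a = a" "b * a * b = b" "s (a * b) = a * b" "s (b * a) = b * a"
    and c: "a * c * a = a" "c * a * c = c" "s (a * c) = a * c" "s (c * a) = c * a"
    using assms(2,3) by (auto simp: is_mp_inverse_def)
  note sm = involutionD(2)[OF assms(1)]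
  have "a * b = (a * c) * (a * b)" using c(1) by (metis mult.assoc)
  also have "\<dots> = s (a * b * a * c)" using b(3) c(3) sm by (simp add: mult.assoc)
  also have "\<dots> = a * c" using b(1) c(3) by simp
  finally have right: "a * b = a * c" .
  have "b * a = (b * a) * (c * a)" using c(1) by (metis mult.assoc)
  also have "\<dots> = s (c * a * b * a)" using b(4) c(4) sm by (simp add: mult.assoc)
  also have "\<dots> = c * a" using b(1) c(4) by (simp add: mult.assoc)
  finally have left: "b * a = c * a" .
  show ?thesis using reflexive_inverses_unique b(2) c(2) right left by blast
qed

lemma mp_inv_eqI:
  assumes "involution s" "is_mp_inverse s a b"
  shows "mp_inv s a = b"
  unfolding mp_inv_def using assms mp_inverse_unique by blast

lemma group_inverse_unique:
  assumes "is_group_inverse a b" "is_group_inverse a c"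
  shows "b = c"
proof -
  have b: "a * b * a = a" "b * a * b = b" "a * b = b * a"
    and c: "a * c * a = a" "c * a * c = c" "a * c = c * a"
    using assms by (auto simp: is_group_inverse_def)
  have "a * b = (c * a) * (a * b)" using c by (metis mult.assoc)
  also have "\<dots> = c * a" using b by (metis mult.assoc)
  finally have "a * b = a * c" using c(3) by simp
  then show ?thesis using reflexive_inverses_unique b c by metis
qed

lemma group_inv_eqI:
  assumes "is_group_inverse a b"
  shows "group_inv a = b"
  unfolding group_inv_def using assms group_inverse_unique by blast

lemma group_inverse_square_cancel_left:
  assumes "is_group_inverse a g" "a * a * y = a * a * z"
  shows "a * y = a * z"
proof -
  have "g * (a * a) = a" using assms(1) by (metis is_group_inverse_def mult.assoc)
  then show ?thesis using assms(2) by (metis mult.assoc)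
qed

lemma left_equiv_iff_absorption:
  assumes "is_group_inverse a g" "a * x * a = a"
  shows "left_equiv (x * a ^ 2) (a * y * x) (x * a ^ 2) \<longleftrightarrow> a * y * x = a"
proof -
  have absorb: "a * (x * a ^ 2 * w) = a * a * w" for w
  proof -
    have "a * (x * a ^ 2 * w) = (a * x * a) * a * w"
      by (simp add: power2_eq_square mult.assoc)
    then show ?thesis using assms(2) by simp
  qed
  have collapse: "x * a ^ 2 * (x * a ^ 2) = x * a ^ 2 * a"
  proof -
    have "x * a ^ 2 * (x * a ^ 2) = x * a * (a * x * a) * a"
      by (simp add: power2_eq_square mult.assoc)
    then show ?thesis
      unfolding assms(2) by (simp add: power2_eq_square mult.assoc)
  qed
  show ?thesis
  proof
    assume "left_equiv (x * a ^ 2) (a * y * x) (x * a ^ 2)"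
    then have "a * (x * a ^ 2 * (a * y * x)) = a * (x * a ^ 2 * a)"
      using collapse by (simp add: left_equiv_def)
    then have "a * a * (a * y * x) = a * a * a"
      by (simp only: absorb)
    then have "a * (a * y * x) = a * a"
      by (rule group_inverse_square_cancel_left[OF assms(1)])
    then have "a * a * (y * x) = a * a * 1"
      by (simp add: mult.assoc)
    then have "a * (y * x) = a * 1"
      by (rule group_inverse_square_cancel_left[OF assms(1)])
    then show "a * y * x = a"
      by (simp add: mult.assoc)
  next
    assume "a * y * x = a"
    then show "left_equiv (x * a ^ 2) (a * y * x) (x * a ^ 2)"
      using collapse by (simp add: left_equiv_def)
  qed
qed

lemma group_inverse_is_mp_inverse:
  assumes "is_group_inverse a g" "is_mp_inverse s a x" "g * a = a * x"
  shows "is_mp_inverse s a g"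
proof -
  have g: "a * g * a = a" "g * a * g = g" "a * g = g * a"
    using assms(1) by (auto simp: is_group_inverse_def)
  have "s (a * x) = a * x"
    using assms(2) by (simp add: is_mp_inverse_def)
  then have "s (g * a) = g * a" and "s (a * g) = a * g"
    using assms(3) g(3) by simp_all
  then show ?thesis using g by (simp add: is_mp_inverse_def)
qed

lemma mp_inverse_eq_group_inverse:
  assumes "involution s" "is_group_inverse a g" "is_mp_inverse s a x" "a * a * x = a"
  shows "x = g"
proof -
  have "g * a = g * (a * a) * x"
    using assms(4) by (simp add: mult.assoc)
  also have "g * (a * a) = a"
    using assms(2) by (metis is_group_inverse_def mult.assoc)
  finally have "is_mp_inverse s a g"
    using group_inverse_is_mp_inverse assms(2,3) by blast
  then show ?thesis using mp_inverse_unique assms(1,3) by blast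
qed

lemma star_group_inverse_eq:
  assumes "involution s" "is_group_inverse a g" "is_mp_inverse s a g" "a * s g * g = a"
  shows "s g = a"
proof -
  note sm = involutionD(2)[OF assms(1)]
  have g: "a * g * a = a" "g * a * g = g" "a * g = g * a"
    using assms(2) by (auto simp: is_group_inverse_def)
  define p where "p = g * a"
  have "s p = p" and "p * g = g" and "g * p = g"
    using assms(3) g unfolding p_def is_mp_inverse_def by (simp_all add: mult.assoc)
  then have sg_p: "s g * p = s g" and p_sg: "p * s g = s g"
    using sm[of p g] sm[of g p] by simp_all
  have "a * s g = a * s g * p"
    using sg_p by (simp add: mult.assoc)
  also have "\<dots> = a * a"
    using assms(4) unfolding p_def by (metis mult.assoc)
  finally have "g * a * s g = g * (a * a)"
    by (simp add: mult.assoc)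
  then show ?thesis
    using p_sg g unfolding p_def by (metis mult.assoc)
qed

lemma SEP_iff_inverses:
  assumes "involution s" "is_group_inverse a g" "is_mp_inverse s a x"
  shows "SEP s a \<longleftrightarrow> s a = x \<and> x = g"
proof -
  have "group_inv a = g" and "mp_inv s a = x"
    using assms group_inv_eqI mp_inv_eqI by blast+
  then show ?thesis
    using assms(2,3) by (auto simp: SEP_def group_invertible_def mp_invertible_def)
qed

lemma star_group_inverse_absorption_iff:
  assumes "involution s" "is_group_inverse a g" "is_mp_inverse s a x"
  shows "a * s g * x = a \<longleftrightarrow> s a = x \<and> x = g"
proof
  assume cond: "a * s g * x = a"
  have x: "a * x * a = a" "x * a * x = x"
    using assms(3) by (auto simp: is_mp_inverse_def)
  have "a * a * x = (a * s g * x) * a * x"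
    using cond by simp
  also have "\<dots> = a * s g * (x * a * x)"
    by (simp add: mult.assoc)
  also have "\<dots> = a"
    using cond x(2) by simp
  finally have "a * a * x = a" .
  then have "x = g"
    using mp_inverse_eq_group_inverse assms by blast
  moreover from this have "s g = a"
    using star_group_inverse_eq assms cond by blast
  ultimately show "s a = x \<and> x = g"
    using involutionD(1)[OF assms(1)] by metis
next
  assume "s a = x \<and> x = g"
  moreover have "a * a * g = a"
    using assms(2) by (metis is_group_inverse_def mult.assoc)
  ultimately show "a * s g * x = a"
    using involutionD(1)[OF assms(1)] by metis
qed

theorem theorem5p3:
  fixes s :: "'a::ring_1 \<Rightarrow> 'a" and a :: 'a
  assumes "involution s"
    and "group_invertible a" and "mp_invertible s a"
  shows "SEP s a \<longleftrightarrow>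
    left_equiv (mp_inv s a * a ^ 2) (a * s (group_inv a) * mp_inv s a) (mp_inv s a * a ^ 2)"
proof -
  obtain g where g: "is_group_inverse a g"
    using assms(2) group_invertible_def by blast
  obtain x where x: "is_mp_inverse s a x"
    using assms(3) mp_invertible_def by blast
  have "a * x * a = a"
    using x by (simp add: is_mp_inverse_def)
  then show ?thesis
    using group_inv_eqI[OF g] mp_inv_eqI[OF assms(1) x] left_equiv_iff_absorption[OF g]
      star_group_inverse_absorption_iff[OF assms(1) g x] SEP_iff_inverses[OF assms(1) g x]
    by simp
qed

end
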